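(* Let $n$ be even, let $x_1,\dots,x_n\in\mathbb{R}^d$, let $\pi_k$ be a permutation of $[n]$ (vector $x_i$ is associated with datapoint $\pi_k(i)$), and let $S\subseteq[n]$ with $|S|=n/2$. Form $\pi_{k+1}$ by thinned reordering: starting from empty lists $\mathrm{front}$ and $\mathrm{back}$, for $i=1,\dots,n$ append $\pi_k(i)$ to $\mathrm{front}$ if $i\in S$ and otherwise prepend $\pi_k(i)$ to $\mathrm{back}$; set $\pi_{k+1}=\mathrm{concatenate}(\mathrm{front},\mathrm{back})$. Let $y_1,\dots,y_n$ be the vectors listed in the new order, i.e. $y_j=x_i$ where $\pi_k(i)=\pi_{k+1}(j)$. With $\eta_i:=2\cdot\mathbf{1}\{i\in S\}-1$, $$\max_{j\in[n]}\Big\|\sum_{l=1}^jy_l\Big\|_2\le\frac12\max_{j\in[n]}\Big\|\sum_{i=1}^jx_i\Big\|_2+\frac12\max_{j\in[n]}\Big\|\sum_{i=1}^j\eta_ix_i\Big\|_2+\Big\|\sum_{i=1}^nx_i\Big\|_2.$$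
   Context: In the paper, $x_i=x_i^k$ are the stochastic gradients of epoch $k$ and $S$ is the set of indices kept by a thinning algorithm returning $n/2$ of the $n$ vectors. *)

theory Defs
  imports "HOL-Analysis.Analysis"
begin

definition thin_step :: "nat set \<Rightarrow> (nat \<Rightarrow> nat) \<Rightarrow> nat list \<times> nat list \<Rightarrow> nat \<Rightarrow> nat list \<times> nat list" where
  "thin_step S \<pi> fb i = (case fb of (front, back) \<Rightarrow>
     if i \<in> S then (front @ [\<pi> i], back) else (front, \<pi> i # back))"

text \<open>The new order pi_{k+1} as a list: run the loop for i = 1..n starting from
  empty lists, then concatenate front and back.  Position j (1-based) of the
  new permutation is entry j-1 of this list.\<close>
definition thinned_reorder :: "nat \<Rightarrow> nat set \<Rightarrow> (nat \<Rightarrow> nat) \<Rightarrow> nat list" where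
  "thinned_reorder n S \<pi> =
     (case foldl (thin_step S \<pi>) ([], []) [1..<n+1] of (front, back) \<Rightarrow> front @ back)"

end

theory Submission
  imports Defs
begin

text \<open>The new order lists the kept positions in increasing order, followed by the discarded ones
  in decreasing order.  A prefix of it is therefore either the kept part of some prefix
  \<open>1, \<dots>, k\<close> of the old order, or everything except the discarded part of such a prefix.
  With \<open>P\<^sub>k\<close> and \<open>Q\<^sub>k\<close> the prefix sums of \<open>x\<^sub>i\<close> and of \<open>\<eta>\<^sub>i x\<^sub>i\<close>, the kept part sums to
  \<open>(P\<^sub>k + Q\<^sub>k) / 2\<close> and the discarded part to \<open>(P\<^sub>k - Q\<^sub>k) / 2\<close>, so the triangle inequality gives
  the bound.\<close>

definition thinned_order :: "nat \<Rightarrow> nat set \<Rightarrow> nat list" where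
  "thinned_order n S = filter (\<lambda>i. i \<in> S) [1..<n+1] @ rev (filter (\<lambda>i. i \<notin> S) [1..<n+1])"

lemma length_thinned_order: "length (thinned_order n S) = n"
  using sum_length_filter_compl[of "\<lambda>i. i \<in> S" "[1..<n+1]"] by (simp add: thinned_order_def)

lemma set_thinned_order: "set (thinned_order n S) = {1..n}"
  by (auto simp: thinned_order_def)

lemma foldl_thin_step:
  "foldl (thin_step S \<pi>) (F, B) xs =
     (F @ map \<pi> (filter (\<lambda>i. i \<in> S) xs), rev (map \<pi> (filter (\<lambda>i. i \<notin> S) xs)) @ B)"
  by (induction xs arbitrary: F B) (auto simp: thin_step_def)

lemma thinned_reorder_eq_map_thinned_order:
  "thinned_reorder n S \<pi> = map \<pi> (thinned_order n S)"
  by (simp add: thinned_reorder_def thinned_order_def foldl_thin_step rev_map)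

lemma take_filter_eq_filter_take:
  "\<exists>k \<le> length xs. take j (filter P xs) = filter P (take k xs)"
proof (induction xs arbitrary: j)
  case Nil
  then show ?case by simp
next
  case (Cons a xs)
  show ?case
  proof (cases "P a \<and> j = 0")
    case True
    then show ?thesis by (intro exI[of _ 0]) simp
  next
    case False
    obtain k where "k \<le> length xs" "take (if P a then j - 1 else j) (filter P xs) = filter P (take k xs)"
      using Cons.IH by blast
    with False show ?thesis by (intro exI[of _ "Suc k"]) (auto simp: take_Cons')
  qed
qed

lemma sum_list_filter_add_filter_not:
  "sum_list (map f (filter P xs)) + sum_list (map f (filter (\<lambda>i. \<not> P i) xs))
     = (sum_list (map f xs) :: 'b::ab_group_add)"
  by (induction xs) (simp_all add: algebra_simps)

lemma sum_list_take_filter_append_rev_filter: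
  fixes f :: "'a \<Rightarrow> 'b::ab_group_add"
  obtains k where "k \<le> length xs"
      "sum_list (map f (take j (filter P xs @ rev (filter (\<lambda>i. \<not> P i) xs))))
         = sum_list (map f (filter P (take k xs)))"
  | k where "k \<le> length xs"
      "sum_list (map f (take j (filter P xs @ rev (filter (\<lambda>i. \<not> P i) xs))))
         = sum_list (map f xs) - sum_list (map f (filter (\<lambda>i. \<not> P i) (take k xs)))"
proof -
  define F where "F = filter P xs"
  define G where "G = filter (\<lambda>i. \<not> P i) xs"
  define \<Sigma> where "\<Sigma> = (\<lambda>ys. sum_list (map f ys))"
  show thesis
  proof (cases "j \<le> length F")
    case True
    obtain k where k: "k \<le> length xs" "take j F = filter P (take k xs)"
      unfolding F_def using take_filter_eq_filter_take by blast
    with True have "take j (F @ rev G) = filter P (take k xs)" by simp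
    then show thesis using that(1)[OF k(1)] unfolding F_def G_def by metis
  next
    case False
    define t where "t = length G - (j - length F)"
    obtain k where k: "k \<le> length xs" "take t G = filter (\<lambda>i. \<not> P i) (take k xs)"
      unfolding G_def using take_filter_eq_filter_take by blast
    have "take j (F @ rev G) = F @ rev (drop t G)"
      using False by (simp add: take_rev t_def)
    then have "\<Sigma> (take j (F @ rev G)) = \<Sigma> F + \<Sigma> (drop t G)"
      unfolding \<Sigma>_def by (simp add: sum_list_rev rev_map[symmetric])
    also have "\<Sigma> (drop t G) = \<Sigma> G - \<Sigma> (take t G)"
      unfolding \<Sigma>_def by (metis append_take_drop_id map_append sum_list_append add_diff_cancel_left')
    also have "\<Sigma> F + (\<Sigma> G - \<Sigma> (take t G)) = \<Sigma> xs - \<Sigma> (take t G)"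
      using sum_list_filter_add_filter_not[of f P xs] unfolding \<Sigma>_def F_def G_def
      by (simp add: add_diff_eq)
    finally show thesis
      using that(2)[OF k(1)] k(2) unfolding \<Sigma>_def F_def G_def by metis
  qed
qed

lemma sum_list_filter_upt_conv_sum:
  "sum_list (map f (filter P [1..<k+1])) = (\<Sum>i=1..k. if P i then f i else 0)"
  unfolding sum_list_map_filter' interv_sum_list_conv_sum_set_nat set_upt
  by (simp add: atLeastLessThanSuc_atLeastAtMost)

lemma sum_kept_eq_half_sum_add_signed_sum:
  fixes x :: "nat \<Rightarrow> 'a::real_vector"
  shows "(\<Sum>i\<in>A. if i \<in> S then x i else 0)
    = (1/2) *\<^sub>R (sum x A + (\<Sum>i\<in>A. (2 * (if i \<in> S then 1 else 0) - 1) *\<^sub>R x i))"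
proof -
  have "(\<Sum>i\<in>A. if i \<in> S then x i else 0)
      = (\<Sum>i\<in>A. (1/2) *\<^sub>R (x i + (2 * (if i \<in> S then 1 else 0) - 1) *\<^sub>R x i))"
    by (intro sum.cong refl) (simp flip: scaleR_2)
  then show ?thesis by (simp only: sum.distrib[symmetric] scaleR_sum_right)
qed

lemma sum_discarded_eq_half_sum_diff_signed_sum:
  fixes x :: "nat \<Rightarrow> 'a::real_vector"
  shows "(\<Sum>i\<in>A. if i \<notin> S then x i else 0)
    = (1/2) *\<^sub>R (sum x A - (\<Sum>i\<in>A. (2 * (if i \<in> S then 1 else 0) - 1) *\<^sub>R x i))"
proof -
  have "(\<Sum>i\<in>A. if i \<notin> S then x i else 0)
      = (\<Sum>i\<in>A. (1/2) *\<^sub>R (x i - (2 * (if i \<in> S then 1 else 0) - 1) *\<^sub>R x i))"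
    by (intro sum.cong refl) (simp flip: scaleR_2)
  then show ?thesis by (simp only: sum_subtractf[symmetric] scaleR_sum_right)
qed

lemma norm_sum_atLeastAtMost_le_Max:
  fixes f :: "nat \<Rightarrow> 'a::real_normed_vector"
  assumes "k \<le> n" and "0 < n"
  shows "norm (\<Sum>i=1..k. f i) \<le> Max ((\<lambda>j. norm (\<Sum>i=1..j. f i)) ` {1..n})"
proof (cases "k = 0")
  case True
  have "norm (\<Sum>i=1..1. f i) \<le> Max ((\<lambda>j. norm (\<Sum>i=1..j. f i)) ` {1..n})"
    using assms(2) by (intro Max_ge finite_imageI image_eqI[where x=1]) simp_all
  with True show ?thesis by (simp add: order_trans[OF norm_ge_zero])
next
  case False
  with assms show ?thesis by (intro Max_ge finite_imageI imageI) simp_all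
qed

lemma sum_take_thinned_order_cases:
  fixes x :: "nat \<Rightarrow> 'a::real_vector" and S :: "nat set"
  defines "P k \<equiv> \<Sum>i=1..k. x i"
    and "Q k \<equiv> \<Sum>i=1..k. (2 * (if i \<in> S then 1 else 0) - 1) *\<^sub>R x i"
  obtains k where "k \<le> n" "sum_list (map x (take j (thinned_order n S))) = (1/2) *\<^sub>R (P k + Q k)"
  | k where "k \<le> n" "sum_list (map x (take j (thinned_order n S))) = P n - (1/2) *\<^sub>R (P k - Q k)"
proof -
  let ?\<Sigma> = "sum_list (map x (take j (thinned_order n S)))"
  have take_one_upt: "take k [1..<n+1] = [1..<k+1]" if "k \<le> length [1..<n+1]" for k
    using that by (simp add: take_upt del: upt_Suc)
  show thesis
  proof (cases rule: sum_list_take_filter_append_rev_filter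
      [where xs = "[1..<n+1]" and f = x and P = "\<lambda>i. i \<in> S" and j = j])
    case (1 k)
    from 1 have "?\<Sigma> = sum_list (map x (filter (\<lambda>i. i \<in> S) [1..<k+1]))"
      by (simp only: thinned_order_def take_one_upt)
    also have "\<dots> = (1/2) *\<^sub>R (P k + Q k)"
      unfolding sum_list_filter_upt_conv_sum P_def Q_def
      by (rule sum_kept_eq_half_sum_add_signed_sum)
    finally have "?\<Sigma> = (1/2) *\<^sub>R (P k + Q k)" .
    moreover have "k \<le> n" using 1(1) by (simp only: length_upt diff_add_inverse2)
    ultimately show thesis using that(1) by blast
  next
    case (2 k)
    from 2 have "?\<Sigma> = sum_list (map x [1..<n+1])
        - sum_list (map x (filter (\<lambda>i. i \<notin> S) [1..<k+1]))"
      by (simp only: thinned_order_def take_one_upt)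
    also have "\<dots> = P n - (1/2) *\<^sub>R (P k - Q k)"
      unfolding sum_list_filter_upt_conv_sum P_def Q_def sum_discarded_eq_half_sum_diff_signed_sum
      by (simp add: interv_sum_list_conv_sum_set_nat atLeastLessThanSuc_atLeastAtMost del: upt_Suc)
    finally have "?\<Sigma> = P n - (1/2) *\<^sub>R (P k - Q k)" .
    moreover have "k \<le> n" using 2(1) by (simp only: length_upt diff_add_inverse2)
    ultimately show thesis using that(2) by blast
  qed
qed

lemma norm_sum_take_thinned_order_le:
  fixes x :: "nat \<Rightarrow> 'a::real_normed_vector"
  assumes "0 < n"
  shows "norm (sum_list (map x (take j (thinned_order n S))))
    \<le> 1/2 * Max ((\<lambda>j. norm (\<Sum>i=1..j. x i)) ` {1..n})
      + 1/2 * Max ((\<lambda>j. norm (\<Sum>i=1..j. (2 * (if i \<in> S then 1 else 0) - 1) *\<^sub>R x i)) ` {1..n})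
      + norm (\<Sum>i=1..n. x i)"
    (is "norm ?\<Sigma> \<le> 1/2 * ?A + 1/2 * ?B + norm (?P n)")
proof -
  let ?Q = "\<lambda>k. \<Sum>i=1..k. (2 * (if i \<in> S then 1 else 0) - 1) *\<^sub>R x i"
  have bound: "norm (?P k) \<le> ?A" "norm (?Q k) \<le> ?B" if "k \<le> n" for k
    using that assms by (simp_all only: norm_sum_atLeastAtMost_le_Max)
  have half_le: "norm ((1/2) *\<^sub>R (?P k + ?Q k)) \<le> 1/2 * ?A + 1/2 * ?B"
      "norm ((1/2) *\<^sub>R (?P k - ?Q k)) \<le> 1/2 * ?A + 1/2 * ?B" if "k \<le> n" for k
  proof -
    have "norm (?P k + ?Q k) \<le> ?A + ?B"
      using norm_triangle_ineq[of "?P k" "?Q k"] bound[OF that] by linarith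
    moreover have "norm (?P k - ?Q k) \<le> ?A + ?B"
      using norm_triangle_ineq4[of "?P k" "?Q k"] bound[OF that] by linarith
    ultimately show "norm ((1/2) *\<^sub>R (?P k + ?Q k)) \<le> 1/2 * ?A + 1/2 * ?B"
      "norm ((1/2) *\<^sub>R (?P k - ?Q k)) \<le> 1/2 * ?A + 1/2 * ?B" by simp_all
  qed
  show ?thesis
  proof (cases rule: sum_take_thinned_order_cases[where x = x and n = n and S = S and j = j])
    case (1 k)
    then have "norm ?\<Sigma> \<le> 1/2 * ?A + 1/2 * ?B" using half_le(1)[of k] by (simp only:)
    then show ?thesis using norm_ge_zero[of "?P n"] by linarith
  next
    case (2 k)
    then have "norm ?\<Sigma> \<le> norm (?P n) + norm ((1/2) *\<^sub>R (?P k - ?Q k))"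
      by (simp only: norm_triangle_ineq4)
    then show ?thesis using half_le(2)[OF 2(1)] by linarith
  qed
qed

lemma sum_nth_atLeastAtMost_conv_sum_list_take:
  "j \<le> length xs \<Longrightarrow> (\<Sum>l=1..j. f (xs ! (l - 1))) = sum_list (map f (take j xs))"
  by (induction j) (simp_all add: take_Suc_conv_app_nth)

lemma sum_thinned_reorder_conv_sum_list_take:
  assumes "bij_betw \<pi> {1..n} {1..n}" and "j \<le> n"
  shows "(\<Sum>l=1..j. x (inv_into {1..n} \<pi> (thinned_reorder n S \<pi> ! (l - 1))))
    = sum_list (map x (take j (thinned_order n S)))"
proof -
  let ?M = "thinned_order n S"
  have "inv_into {1..n} \<pi> (thinned_reorder n S \<pi> ! (l - 1)) = ?M ! (l - 1)" if "l \<in> {1..j}" for l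
  proof -
    have "l - 1 < length ?M" using that assms(2) by (auto simp: length_thinned_order)
    then have "?M ! (l - 1) \<in> {1..n}" using nth_mem set_thinned_order by blast
    with \<open>l - 1 < length ?M\<close> show ?thesis
      using bij_betw_inv_into_left[OF assms(1)] by (simp add: thinned_reorder_eq_map_thinned_order)
  qed
  then have "(\<Sum>l=1..j. x (inv_into {1..n} \<pi> (thinned_reorder n S \<pi> ! (l - 1))))
      = (\<Sum>l=1..j. x (?M ! (l - 1)))"
    by (intro sum.cong refl) simp
  also have "\<dots> = sum_list (map x (take j ?M))"
    using assms(2) by (intro sum_nth_atLeastAtMost_conv_sum_list_take) (simp add: length_thinned_order)
  finally show ?thesis .
qed

theorem lemmaG1:
  fixes n :: nat and x :: "nat \<Rightarrow> real ^ 'd" and pik :: "nat \<Rightarrow> nat" and S :: "nat set"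
  assumes "even n" and "0 < n"
    and "bij_betw pik {1..n} {1..n}"
    and "S \<subseteq> {1..n}" and "card S = n div 2"
  defines "y \<equiv> (\<lambda>j. x (inv_into {1..n} pik (thinned_reorder n S pik ! (j - 1))))"
    and "eta \<equiv> (\<lambda>i. 2 * (if i \<in> S then 1 else 0) - (1::real))"
  shows "Max ((\<lambda>j. norm (\<Sum>l=1..j. y l)) ` {1..n})
         \<le> 1/2 * Max ((\<lambda>j. norm (\<Sum>i=1..j. x i)) ` {1..n})
           + 1/2 * Max ((\<lambda>j. norm (\<Sum>i=1..j. eta i *\<^sub>R x i)) ` {1..n})
           + norm (\<Sum>i=1..n. x i)"
proof -
  have "norm (\<Sum>l=1..j. y l)
      \<le> 1/2 * Max ((\<lambda>j. norm (\<Sum>i=1..j. x i)) ` {1..n})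
        + 1/2 * Max ((\<lambda>j. norm (\<Sum>i=1..j. eta i *\<^sub>R x i)) ` {1..n})
        + norm (\<Sum>i=1..n. x i)" if "j \<in> {1..n}" for j
    using that unfolding y_def eta_def
    by (simp only: sum_thinned_reorder_conv_sum_list_take[OF assms(3)] atLeastAtMost_iff
        norm_sum_take_thinned_order_le[OF assms(2)])
  then show ?thesis using assms(2) by (intro Max.boundedI) auto
qed

end
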